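(* Let the setting, Assumption A and Assumption B below hold, with agents and data sampled without replacement, and let $w_i$ be generated by the ISFedAvg algorithm below. Define the incremental noise $$q_i=\frac1L\sum_{\ell\in\mathcal{L}_i}\frac{1}{Kp_\ell E_\ell B_\ell}\sum_{e=1}^{E_\ell}\sum_{b\in\mathcal{B}_{\ell,e}}\frac{1}{N_\ell p_b^{(\ell)}}\Big(\nabla_w Q_\ell(w_{\ell,e-1};x_{\ell,b})-\nabla_w Q_\ell(w_{i-1};x_{\ell,b})\Big).$$ Then $$\mathbb{E}\|q_i\|^2\le O(\mu)\,\mathbb{E}\|\widetilde w_{i-1}\|^2+O(\mu)\,\xi^2+O(\mu^2)\frac1K\sum_{k=1}^K\sigma_{q,k}^2,$$ where $\widetilde w_{i-1}=w^o-w_{i-1}$, $\sigma_{q,k}^2=\frac{3}{B_kN_k^2}\sum_{n=1}^{N_k}\frac{1}{p_n^{(k)}}\|\nabla_wQ_k(w_k^o;x_{k,n})\|^2$, and the constants implicit in the $O(\cdot)$ terms depend on the epoch sizes, local convergence rates, numbers of data samples, number of agents, Lipschitz constant, and the data and agent normalized inclusion probabilities. In particular $\mathbb{E}\|q_i\|^2=O(\mu)$.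
   Context: There are $K$ agents; agent $k$ holds data points $x_{k,1},\dots,x_{k,N_k}$, a loss $Q_k(w;x)$ differentiable in $w\in\mathbb{R}^M$, and the empirical risk $P_k(w)=\frac1{N_k}\sum_{n=1}^{N_k}Q_k(w;x_{k,n})$. Let $w^o=\arg\min_w\frac1K\sum_kP_k(w)$ and $w_k^o=\arg\min_wP_k(w)$. Assumption A: each $P_k$ is $\nu$-strongly convex ($\nu>0$), each $Q_k(\cdot;x_{k,n})$ is convex with $\delta$-Lipschitz gradient. Assumption B: $\|w_k^o-w^o\|\le\xi$ for all $k$. ISFedAvg with step-size $\mu>0$: at iteration $i$, select $L$ agents $\mathcal{L}_i$ from $\{1,\dots,K\}$ without replacement with $\mathbb{P}(k\in\mathcal{L}_i)=Lp_k$ ($p_k>0$, $\sum_kp_k=1$); each $k\in\mathcal{L}_i$ sets $w_{k,0}=w_{i-1}$ and for $e=1,\dots,E_k$ draws a mini-batch $\mathcal{B}_{k,e}$ of $B_k$ indices from $\{1,\dots,N_k\}$ without replacement with $\mathbb{P}(n\in\mathcal{B}_{k,e})=B_kp_n^{(k)}$ ($p_n^{(k)}>0$, $\sum_np_n^{(k)}=1$), independently of the past, and updates $w_{k,e}=w_{k,e-1}-\frac{\mu}{Kp_kE_kB_k}\sum_{b\in\mathcal{B}_{k,e}}\frac{1}{N_kp_b^{(k)}}\nabla_wQ_k(w_{k,e-1};x_{k,b})$; then $w_i=\frac1L\sum_{k\in\mathcal{L}_i}w_{k,E_k}$. The notation $O(\mu^a)$ denotes a term bounded by $C\mu^a$ for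 a constant $C$ independent of $\mu$ and $i$, for sufficiently small $\mu$. *)

theory Defs
  imports "HOL-Probability.Probability"
begin

definition strongly_convex_fun :: "real \<Rightarrow> ('a::real_inner \<Rightarrow> real) \<Rightarrow> bool" where
  "strongly_convex_fun \<nu> f \<longleftrightarrow>
     (\<forall>x y t. 0 \<le> t \<and> t \<le> 1 \<longrightarrow>
        f (t *\<^sub>R x + (1 - t) *\<^sub>R y)
          \<le> t * f x + (1 - t) * f y - \<nu> / 2 * t * (1 - t) * (norm (x - y))\<^sup>2)"

definition emp_risk :: "(nat \<Rightarrow> nat) \<Rightarrow> (nat \<Rightarrow> 'a \<Rightarrow> 'x \<Rightarrow> real) \<Rightarrow> (nat \<Rightarrow> nat \<Rightarrow> 'x)
    \<Rightarrow> nat \<Rightarrow> 'a \<Rightarrow> real" where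
  "emp_risk N Q x k w = (1 / real (N k)) * (\<Sum>n<N k. Q k w (x k n))"

definition agent_design :: "nat \<Rightarrow> nat \<Rightarrow> (nat \<Rightarrow> real) \<Rightarrow> nat set pmf \<Rightarrow> bool" where
  "agent_design K L p asel \<longleftrightarrow>
     set_pmf asel \<subseteq> {S. S \<subseteq> {..<K} \<and> card S = L} \<and>
     (\<forall>k<K. measure_pmf.prob asel {S. k \<in> S} = real L * p k)"

definition batch_design :: "nat \<Rightarrow> nat \<Rightarrow> (nat \<Rightarrow> real) \<Rightarrow> nat set pmf \<Rightarrow> bool" where
  "batch_design N B pn bsel \<longleftrightarrow>
     set_pmf bsel \<subseteq> {S. S \<subseteq> {..<N} \<and> card S = B} \<and>
     (\<forall>n<N. measure_pmf.prob bsel {S. n \<in> S} = real B * pn n)"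

text \<open>Local iterate w_{k,e} of agent k started from w, given the mini-batches
  bs (k,e) = B_{k,e}.  G k n w is the gradient of Q_k(.; x_{k,n}) at w.\<close>
fun local_iter :: "real \<Rightarrow> nat \<Rightarrow> (nat \<Rightarrow> real) \<Rightarrow> (nat \<Rightarrow> nat) \<Rightarrow> (nat \<Rightarrow> nat) \<Rightarrow> (nat \<Rightarrow> nat)
    \<Rightarrow> (nat \<Rightarrow> nat \<Rightarrow> real) \<Rightarrow> (nat \<Rightarrow> nat \<Rightarrow> 'a \<Rightarrow> 'a) \<Rightarrow> nat \<Rightarrow> 'a
    \<Rightarrow> (nat \<times> nat \<Rightarrow> nat set) \<Rightarrow> nat \<Rightarrow> 'a::real_vector" where
  "local_iter \<mu> K p N E B pn G k w bs 0 = w"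
| "local_iter \<mu> K p N E B pn G k w bs (Suc e) =
     local_iter \<mu> K p N E B pn G k w bs e
     - (\<mu> / (real K * p k * real (E k) * real (B k))) *\<^sub>R
         (\<Sum>b\<in>bs (k, Suc e). (1 / (real (N k) * pn k b)) *\<^sub>R
             G k b (local_iter \<mu> K p N E B pn G k w bs e))"

text \<open>Randomness of one round: the agent set L_i and all mini-batches B_{k,e},
  drawn independently (mini-batches of non-selected agents are irrelevant).\<close>
definition round_pmf :: "nat \<Rightarrow> (nat \<Rightarrow> nat) \<Rightarrow> nat set pmf \<Rightarrow> (nat \<Rightarrow> nat set pmf)
    \<Rightarrow> (nat set \<times> (nat \<times> nat \<Rightarrow> nat set)) pmf" where
  "round_pmf K E asel bsel =
     pair_pmf asel (Pi_pmf (SIGMA k:{..<K}. {1..E k}) {} (\<lambda>(k, e). bsel k))"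

definition fedavg_next :: "real \<Rightarrow> nat \<Rightarrow> nat \<Rightarrow> (nat \<Rightarrow> real) \<Rightarrow> (nat \<Rightarrow> nat) \<Rightarrow> (nat \<Rightarrow> nat)
    \<Rightarrow> (nat \<Rightarrow> nat) \<Rightarrow> (nat \<Rightarrow> nat \<Rightarrow> real) \<Rightarrow> (nat \<Rightarrow> nat \<Rightarrow> 'a \<Rightarrow> 'a) \<Rightarrow> 'a
    \<Rightarrow> nat set \<times> (nat \<times> nat \<Rightarrow> nat set) \<Rightarrow> 'a::real_vector" where
  "fedavg_next \<mu> K L p N E B pn G w \<omega> =
     (1 / real L) *\<^sub>R (\<Sum>k\<in>fst \<omega>. local_iter \<mu> K p N E B pn G k w (snd \<omega>) (E k))"

definition incr_noise :: "real \<Rightarrow> nat \<Rightarrow> nat \<Rightarrow> (nat \<Rightarrow> real) \<Rightarrow> (nat \<Rightarrow> nat) \<Rightarrow> (nat \<Rightarrow> nat)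
    \<Rightarrow> (nat \<Rightarrow> nat) \<Rightarrow> (nat \<Rightarrow> nat \<Rightarrow> real) \<Rightarrow> (nat \<Rightarrow> nat \<Rightarrow> 'a \<Rightarrow> 'a) \<Rightarrow> 'a
    \<Rightarrow> nat set \<times> (nat \<times> nat \<Rightarrow> nat set) \<Rightarrow> 'a::real_vector" where
  "incr_noise \<mu> K L p N E B pn G w \<omega> =
     (1 / real L) *\<^sub>R (\<Sum>l\<in>fst \<omega>. (1 / (real K * p l * real (E l) * real (B l))) *\<^sub>R
        (\<Sum>e\<in>{1..E l}. \<Sum>b\<in>snd \<omega> (l, e). (1 / (real (N l) * pn l b)) *\<^sub>R
            (G l b (local_iter \<mu> K p N E B pn G l w (snd \<omega>) (e - 1)) - G l b w)))"

text \<open>Distribution of the iterates: iterates ... w0 j is the law of the j-th iterate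
  after the deterministic initial point w0 (rounds are independent).\<close>
fun iterates :: "real \<Rightarrow> nat \<Rightarrow> nat \<Rightarrow> (nat \<Rightarrow> real) \<Rightarrow> (nat \<Rightarrow> nat) \<Rightarrow> (nat \<Rightarrow> nat)
    \<Rightarrow> (nat \<Rightarrow> nat) \<Rightarrow> (nat \<Rightarrow> nat \<Rightarrow> real) \<Rightarrow> (nat \<Rightarrow> nat \<Rightarrow> 'a \<Rightarrow> 'a)
    \<Rightarrow> nat set pmf \<Rightarrow> (nat \<Rightarrow> nat set pmf) \<Rightarrow> 'a \<Rightarrow> nat \<Rightarrow> 'a::real_vector pmf" where
  "iterates \<mu> K L p N E B pn G asel bsel w0 0 = return_pmf w0"
| "iterates \<mu> K L p N E B pn G asel bsel w0 (Suc j) =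
     bind_pmf (iterates \<mu> K L p N E B pn G asel bsel w0 j)
       (\<lambda>w. map_pmf (fedavg_next \<mu> K L p N E B pn G w) (round_pmf K E asel bsel))"

text \<open>Law of the incremental noise of the round following iterate j.\<close>
definition noise_pmf :: "real \<Rightarrow> nat \<Rightarrow> nat \<Rightarrow> (nat \<Rightarrow> real) \<Rightarrow> (nat \<Rightarrow> nat) \<Rightarrow> (nat \<Rightarrow> nat)
    \<Rightarrow> (nat \<Rightarrow> nat) \<Rightarrow> (nat \<Rightarrow> nat \<Rightarrow> real) \<Rightarrow> (nat \<Rightarrow> nat \<Rightarrow> 'a \<Rightarrow> 'a)
    \<Rightarrow> nat set pmf \<Rightarrow> (nat \<Rightarrow> nat set pmf) \<Rightarrow> 'a \<Rightarrow> nat \<Rightarrow> 'a::real_vector pmf" where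
  "noise_pmf \<mu> K L p N E B pn G asel bsel w0 j =
     bind_pmf (iterates \<mu> K L p N E B pn G asel bsel w0 j)
       (\<lambda>w. map_pmf (incr_noise \<mu> K L p N E B pn G w) (round_pmf K E asel bsel))"

definition sigma_q2 :: "(nat \<Rightarrow> nat) \<Rightarrow> (nat \<Rightarrow> nat) \<Rightarrow> (nat \<Rightarrow> nat \<Rightarrow> real)
    \<Rightarrow> (nat \<Rightarrow> nat \<Rightarrow> 'a \<Rightarrow> 'a::real_normed_vector) \<Rightarrow> (nat \<Rightarrow> 'a) \<Rightarrow> nat \<Rightarrow> real" where
  "sigma_q2 N B pn G wko k =
     3 / (real (B k) * (real (N k))\<^sup>2) * (\<Sum>n<N k. (1 / pn k n) * (norm (G k n (wko k)))\<^sup>2)"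


definition instance_assms :: "nat \<Rightarrow> nat \<Rightarrow> (nat \<Rightarrow> real) \<Rightarrow> (nat \<Rightarrow> nat) \<Rightarrow> (nat \<Rightarrow> nat)
    \<Rightarrow> (nat \<Rightarrow> nat \<Rightarrow> real) \<Rightarrow> real \<Rightarrow> real
    \<Rightarrow> (nat \<Rightarrow> 'a::euclidean_space \<Rightarrow> 'x \<Rightarrow> real) \<Rightarrow> (nat \<Rightarrow> 'a \<Rightarrow> 'x \<Rightarrow> 'a) \<Rightarrow> (nat \<Rightarrow> nat \<Rightarrow> 'x)
    \<Rightarrow> real \<Rightarrow> 'a \<Rightarrow> (nat \<Rightarrow> 'a) \<Rightarrow> nat set pmf \<Rightarrow> (nat \<Rightarrow> nat set pmf) \<Rightarrow> bool" where
  "instance_assms K L p N B pn \<delta> \<nu> Q grad x \<xi> wo wko asel bsel \<longleftrightarrow>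
     \<comment> \<open>grad k w (x k n) is the gradient of Q_k(.; x_{k,n}) at w\<close>
     (\<forall>k<K. \<forall>n<N k. \<forall>w. ((\<lambda>v. Q k v (x k n)) has_derivative (\<lambda>h. grad k w (x k n) \<bullet> h)) (at w)) \<and>
     \<comment> \<open>Assumption A\<close>
     (\<forall>k<K. strongly_convex_fun \<nu> (emp_risk N Q x k)) \<and>
     (\<forall>k<K. \<forall>n<N k. convex_on UNIV (\<lambda>v. Q k v (x k n))) \<and>
     (\<forall>k<K. \<forall>n<N k. \<delta>-lipschitz_on UNIV (\<lambda>v. grad k v (x k n))) \<and>
     \<comment> \<open>w^o minimizes 1/K sum_k P_k, w_k^o minimizes P_k\<close>
     (\<forall>w. (1 / real K) * (\<Sum>k<K. emp_risk N Q x k wo) \<le> (1 / real K) * (\<Sum>k<K. emp_risk N Q x k w)) \<and>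
     (\<forall>k<K. \<forall>w. emp_risk N Q x k (wko k) \<le> emp_risk N Q x k w) \<and>
     \<comment> \<open>Assumption B\<close>
     (\<forall>k<K. norm (wko k - wo) \<le> \<xi>) \<and>
     \<comment> \<open>sampling without replacement with the prescribed inclusion probabilities\<close>
     agent_design K L p asel \<and>
     (\<forall>k<K. batch_design (N k) (B k) (pn k) (bsel k))"

end

theory Submission
  imports Defs
begin

text \<open>
  Write a round as \<open>w\<^sub>i = w\<^sub>i\<^sub>-\<^sub>1 - \<mu> (s\<^sub>i + q\<^sub>i)\<close>, with \<open>s\<^sub>i\<close> the importance-weighted gradient
  estimate at \<open>w\<^sub>i\<^sub>-\<^sub>1\<close>.  For step sizes below a threshold depending only on the sampling
  parameters and \<open>\<delta>\<close>, a local step at most doubles the distance of a local model from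
  \<open>w\<^sub>i\<^sub>-\<^sub>1\<close>, so all local models stay within \<open>O(\<mu>) \<Gamma>(w\<^sub>i\<^sub>-\<^sub>1)\<close> of it, where \<open>\<Gamma>(w)\<close> (\<open>grad_mass\<close>) is the
  total norm of all sample gradients at \<open>w\<close>; Lipschitz continuity of the gradients then gives
  \<open>\<parallel>q\<^sub>i\<parallel> = O(\<mu>) \<Gamma>(w\<^sub>i\<^sub>-\<^sub>1)\<close>.  Comparing with the local minimisers \<open>w\<^sub>k\<^sup>o\<close> (Assumption B) yields
  \<open>\<Gamma>(w)\<^sup>2 = O(\<parallel>w\<^sup>o - w\<parallel>\<^sup>2 + \<xi>\<^sup>2 + 1/K \<Sum>\<^sub>k \<sigma>\<^sub>q\<^sub>,\<^sub>k\<^sup>2)\<close>, which is the first bound.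

  For \<open>E \<parallel>q\<^sub>i\<parallel>\<^sup>2 = O(\<mu>)\<close> it remains to bound \<open>E \<parallel>w\<^sup>o - w\<^sub>i\<parallel>\<^sup>2\<close> uniformly in \<open>i\<close>.  The inclusion
  probabilities \<open>L p\<^sub>k\<close> and \<open>B\<^sub>k p\<^sub>n\<^sup>(\<^sup>k\<^sup>)\<close> cancel the importance weights, so \<open>s\<^sub>i\<close> is unbiased for
  the gradient of \<open>1/K \<Sum>\<^sub>k P\<^sub>k\<close>, and strong convexity turns one round into
  \<open>E \<parallel>w\<^sup>o - w\<^sub>i\<parallel>\<^sup>2 \<le> (1 - \<mu> \<nu> / 2) E \<parallel>w\<^sup>o - w\<^sub>i\<^sub>-\<^sub>1\<parallel>\<^sup>2 + O(\<mu>\<^sup>2)\<close>.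
\<close>

section \<open>Expectations over finite supports\<close>

lemma expectation_bind_pmf_finite:
  fixes h :: "'b \<Rightarrow> 'c::{banach, second_countable_topology}"
  assumes "finite (set_pmf M)" "\<And>x. x \<in> set_pmf M \<Longrightarrow> finite (set_pmf (f x))"
  shows "measure_pmf.expectation (bind_pmf M f) h
       = measure_pmf.expectation M (\<lambda>x. measure_pmf.expectation (f x) h)"
  using assms by (simp add: pmf_expectation_bind[of "set_pmf M"] integral_measure_pmf[of "set_pmf M"])

lemma expectation_pair_pmf_finite:
  fixes f :: "'b \<times> 'c \<Rightarrow> 'd::{banach, second_countable_topology}"
  assumes "finite (set_pmf M)" "finite (set_pmf M')"
  shows "measure_pmf.expectation (pair_pmf M M') f
       = measure_pmf.expectation M (\<lambda>a. measure_pmf.expectation M' (\<lambda>b. f (a, b)))"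
  using assms unfolding pair_pmf_def by (simp add: expectation_bind_pmf_finite)

lemma expectation_mono_pmf_finite:
  fixes f g :: "'b \<Rightarrow> real"
  assumes "finite (set_pmf M)" "\<And>x. x \<in> set_pmf M \<Longrightarrow> f x \<le> g x"
  shows "measure_pmf.expectation M f \<le> measure_pmf.expectation M g"
  using assms by (intro integral_mono_AE) (auto simp: integrable_measure_pmf_finite AE_measure_pmf_iff)

lemma expectation_affine_pmf_finite:
  fixes f :: "'b \<Rightarrow> real"
  assumes "finite (set_pmf M)"
  shows "measure_pmf.expectation M (\<lambda>x. a * f x + b) = a * measure_pmf.expectation M f + b"
  using assms by (simp add: integrable_measure_pmf_finite)

lemma expectation_sum_random_subset:
  fixes f :: "'i \<Rightarrow> 'b::{banach, second_countable_topology}"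
  assumes "finite A" "\<And>S. S \<in> set_pmf M \<Longrightarrow> S \<subseteq> A"
  shows "measure_pmf.expectation M (\<lambda>S. \<Sum>i\<in>S. f i) = (\<Sum>i\<in>A. measure_pmf.prob M {S. i \<in> S} *\<^sub>R f i)"
proof -
  have "finite (set_pmf M)"
    using assms by (meson Pow_iff finite_Pow_iff finite_subset subsetI)
  have "measure_pmf.expectation M (\<lambda>S. \<Sum>i\<in>S. f i)
      = measure_pmf.expectation M (\<lambda>S. \<Sum>i\<in>A. indicator {S. i \<in> S} S *\<^sub>R f i)"
  proof (intro integral_cong_AE)
    show "AE S in M. (\<Sum>i\<in>S. f i) = (\<Sum>i\<in>A. indicator {S. i \<in> S} S *\<^sub>R f i)"
      unfolding AE_measure_pmf_iff
    proof
      fix S assume "S \<in> set_pmf M"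
      with assms have "S \<subseteq> A" by blast
      with \<open>finite A\<close> show "(\<Sum>i\<in>S. f i) = (\<Sum>i\<in>A. indicator {S. i \<in> S} S *\<^sub>R f i)"
        by (intro sum.mono_neutral_cong_left) auto
    qed
  qed auto
  also have "\<dots> = (\<Sum>i\<in>A. measure_pmf.prob M {S. i \<in> S} *\<^sub>R f i)"
    using \<open>finite (set_pmf M)\<close> by (simp add: integrable_measure_pmf_finite)
  finally show ?thesis .
qed

section \<open>Two descent inequalities\<close>

lemma strongly_convex_above_tangent:
  fixes f :: "'a::real_inner \<Rightarrow> real"
  assumes convex: "strongly_convex_fun \<nu> f"
    and deriv: "(f has_derivative (\<lambda>h. g \<bullet> h)) (at v)"
  shows "f u \<ge> f v + g \<bullet> (u - v) + \<nu> / 2 * (norm (u - v))\<^sup>2"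
proof -
  define c where "c = \<nu> / 2 * (norm (u - v))\<^sup>2"
  define \<phi> where "\<phi> t = f (v + t *\<^sub>R (u - v))" for t :: real
  have "((\<lambda>t::real. v + t *\<^sub>R (u - v)) has_derivative (\<lambda>t. t *\<^sub>R (u - v))) (at 0 within {0<..})"
    by (auto intro!: derivative_eq_intros)
  moreover have "(f has_derivative (\<lambda>h. g \<bullet> h)) (at ((\<lambda>t. v + t *\<^sub>R (u - v)) 0))"
    using deriv by simp
  ultimately have "(\<phi> has_derivative (\<lambda>t. g \<bullet> (t *\<^sub>R (u - v)))) (at 0 within {0<..})"
    unfolding \<phi>_def by (rule has_derivative_compose)
  moreover have "(\<lambda>t. g \<bullet> (t *\<^sub>R (u - v))) = (*) (g \<bullet> (u - v))"
    by auto
  ultimately have "(\<phi> has_field_derivative g \<bullet> (u - v)) (at 0 within {0<..})"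
    by (simp add: has_field_derivative_def)
  hence slope: "((\<lambda>t. (\<phi> t - \<phi> 0) / (t - 0)) \<longlongrightarrow> g \<bullet> (u - v)) (at_right 0)"
    unfolding has_field_derivative_iff .
  have "((\<lambda>t::real. f u - f v - (1 - t) * c) \<longlongrightarrow> f u - f v - (1 - 0) * c) (at_right 0)"
    by (intro tendsto_intros)
  moreover have "\<forall>\<^sub>F t in at_right 0. (\<phi> t - \<phi> 0) / (t - 0) \<le> f u - f v - (1 - t) * c"
    unfolding eventually_at_right_field
  proof (intro exI[of _ 1] conjI allI impI)
    fix t :: real assume t: "0 < t" "t < 1"
    have "t *\<^sub>R u + (1 - t) *\<^sub>R v = v + t *\<^sub>R (u - v)"
      by (simp add: algebra_simps)
    with convex t have "\<phi> t - \<phi> 0 \<le> t * (f u - f v - (1 - t) * c)"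
      unfolding strongly_convex_fun_def \<phi>_def c_def
      by (force simp: algebra_simps dest: spec[of _ u] spec[of _ v] spec[of _ t])
    with t show "(\<phi> t - \<phi> 0) / (t - 0) \<le> f u - f v - (1 - t) * c"
      by (simp add: divide_le_eq mult.commute)
  qed simp
  ultimately have "g \<bullet> (u - v) \<le> f u - f v - (1 - 0) * c"
    using tendsto_le[OF trivial_limit_at_right_real _ slope] by blast
  thus ?thesis unfolding c_def by simp
qed

lemma sq_norm_perturbed_step_le:
  fixes d s q :: "'a::real_inner"
  assumes noise: "norm q \<le> \<mu> * \<beta> * \<Gamma>" and step: "norm (\<mu> *\<^sub>R (s + q)) \<le> \<mu> * D * \<Gamma>"
    and "0 \<le> \<mu>" "0 \<le> \<beta>"
  shows "(norm (d - \<mu> *\<^sub>R (s + q)))\<^sup>2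
    \<le> (norm d)\<^sup>2 - 2 * \<mu> * (d \<bullet> s) + \<mu>\<^sup>2 * (\<beta> * (norm d)\<^sup>2 + (\<beta> + D\<^sup>2) * \<Gamma>\<^sup>2)"
proof -
  define \<Delta> where "\<Delta> = \<mu> *\<^sub>R (s + q)"
  have "(norm (d - \<Delta>))\<^sup>2 = (norm d)\<^sup>2 - 2 * (d \<bullet> \<Delta>) + (norm \<Delta>)\<^sup>2"
    by (simp add: power2_norm_eq_inner inner_diff_left inner_diff_right inner_commute)
  moreover have "d \<bullet> \<Delta> = \<mu> * (d \<bullet> s) + \<mu> * (d \<bullet> q)"
    by (simp add: \<Delta>_def inner_add_right algebra_simps)
  moreover have "- (2 * \<mu> * (d \<bullet> q)) \<le> \<mu>\<^sup>2 * (\<beta> * (norm d)\<^sup>2) + \<mu>\<^sup>2 * (\<beta> * \<Gamma>\<^sup>2)"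
  proof -
    have "- (d \<bullet> q) \<le> norm d * norm q"
      using Cauchy_Schwarz_ineq2[of d q] by linarith
    also have "\<dots> \<le> norm d * (\<mu> * \<beta> * \<Gamma>)"
      using noise by (simp add: mult_left_mono)
    finally have "2 * \<mu> * (- (d \<bullet> q)) \<le> 2 * \<mu> * (norm d * (\<mu> * \<beta> * \<Gamma>))"
      using \<open>0 \<le> \<mu>\<close> by (intro mult_left_mono) auto
    also have "\<dots> = \<mu>\<^sup>2 * (\<beta> * (2 * norm d * \<Gamma>))"
      by (simp add: power2_eq_square algebra_simps)
    also have "\<dots> \<le> \<mu>\<^sup>2 * (\<beta> * ((norm d)\<^sup>2 + \<Gamma>\<^sup>2))"
      using sum_squares_bound[of "norm d" \<Gamma>] \<open>0 \<le> \<beta>\<close> by (intro mult_left_mono) auto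
    finally show ?thesis
      by (simp add: algebra_simps)
  qed
  moreover have "(norm \<Delta>)\<^sup>2 \<le> \<mu>\<^sup>2 * (D\<^sup>2 * \<Gamma>\<^sup>2)"
    using step unfolding \<Delta>_def by (simp add: power_mono power_mult_distrib flip: power_mult_distrib)
  moreover have "\<mu>\<^sup>2 * (\<beta> * (norm d)\<^sup>2 + (\<beta> + D\<^sup>2) * \<Gamma>\<^sup>2)
      = \<mu>\<^sup>2 * (\<beta> * (norm d)\<^sup>2) + \<mu>\<^sup>2 * (\<beta> * \<Gamma>\<^sup>2) + \<mu>\<^sup>2 * (D\<^sup>2 * \<Gamma>\<^sup>2)"
    by (simp add: algebra_simps)
  ultimately show ?thesis
    unfolding \<Delta>_def by linarith
qed

section \<open>Importance-weighted aggregation\<close>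

locale fedavg_params =
  fixes K L :: nat and N E B :: "nat \<Rightarrow> nat" and p :: "nat \<Rightarrow> real"
    and pn :: "nat \<Rightarrow> nat \<Rightarrow> real" and \<delta> :: real
  assumes agents_pos: "K \<ge> 1" and sampled_pos: "1 \<le> L"
    and agent_prob_pos: "\<forall>k<K. p k > 0"
    and epochs_batches: "\<forall>k<K. E k \<ge> 1 \<and> B k \<ge> 1 \<and> B k \<le> N k"
    and sample_prob: "\<forall>k<K. (\<forall>n<N k. pn k n > 0) \<and> (\<Sum>n<N k. pn k n) = 1"
begin

abbreviation "fedavg_local \<mu> G \<equiv> local_iter \<mu> K p N E B pn G"
abbreviation "fedavg_step \<mu> G \<equiv> fedavg_next \<mu> K L p N E B pn G"
abbreviation "fedavg_noise \<mu> G \<equiv> incr_noise \<mu> K L p N E B pn G"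

definition agent_scale :: "nat \<Rightarrow> real" where
  "agent_scale k = 1 / (real K * p k * real (E k) * real (B k))"

definition sample_scale :: "nat \<Rightarrow> nat \<Rightarrow> real" where
  "sample_scale k n = 1 / (real (N k) * pn k n)"

definition aggregate :: "nat set \<times> (nat \<times> nat \<Rightarrow> nat set) \<Rightarrow> (nat \<Rightarrow> nat \<Rightarrow> nat \<Rightarrow> 'a)
    \<Rightarrow> 'a::real_vector" where
  "aggregate \<omega> f = (1 / real L) *\<^sub>R (\<Sum>l\<in>fst \<omega>. agent_scale l *\<^sub>R
      (\<Sum>e\<in>{1..E l}. \<Sum>b\<in>snd \<omega> (l, e). sample_scale l b *\<^sub>R f l e b))"

definition total_scale :: real where
  "total_scale = (\<Sum>k<K. \<Sum>n<N k. agent_scale k * sample_scale k n)"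

definition total_samples :: real where
  "total_samples = (\<Sum>k<K. real (N k))"

lemma samples_pos: "k < K \<Longrightarrow> N k \<ge> 1"
  using epochs_batches by force

lemma agent_scale_pos: "k < K \<Longrightarrow> agent_scale k > 0"
  unfolding agent_scale_def using agent_prob_pos epochs_batches agents_pos by auto

lemma sample_scale_pos: "k < K \<Longrightarrow> n < N k \<Longrightarrow> sample_scale k n > 0"
  unfolding sample_scale_def using sample_prob samples_pos[of k] by auto

lemma scale_product_nonneg: "k < K \<Longrightarrow> n < N k \<Longrightarrow> 0 \<le> agent_scale k * sample_scale k n"
  using agent_scale_pos sample_scale_pos by (simp add: less_imp_le)

lemma total_scale_nonneg: "total_scale \<ge> 0"
  unfolding total_scale_def by (intro sum_nonneg) (simp add: scale_product_nonneg)

lemma scale_product_le_total: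
  assumes "k < K" "n < N k"
  shows "agent_scale k * sample_scale k n \<le> total_scale"
proof -
  have "agent_scale k * sample_scale k n \<le> (\<Sum>n<N k. agent_scale k * sample_scale k n)"
    using assms by (intro member_le_sum) (auto simp: scale_product_nonneg)
  also have "\<dots> \<le> total_scale"
    unfolding total_scale_def using assms
    by (intro member_le_sum[where f="\<lambda>k. \<Sum>n<N k. agent_scale k * sample_scale k n"])
      (auto intro!: sum_nonneg simp: scale_product_nonneg)
  finally show ?thesis .
qed

lemma total_samples_nonneg: "total_samples \<ge> 0"
  unfolding total_samples_def by (simp add: sum_nonneg)

lemma samples_le_total: "k < K \<Longrightarrow> real (N k) \<le> total_samples"
  unfolding total_samples_def by (intro member_le_sum) auto

lemma aggregate_diff:
  "aggregate \<omega> (\<lambda>l e b. f l e b - g l e b) = aggregate \<omega> f - aggregate \<omega> g"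
  by (simp add: aggregate_def scaleR_diff_right sum_subtractf)

lemma norm_aggregate_le:
  assumes agents: "fst \<omega> \<subseteq> {..<K}"
    and batches: "\<And>l e. l < K \<Longrightarrow> e \<in> {1..E l} \<Longrightarrow> snd \<omega> (l, e) \<subseteq> {..<N l}"
    and bound: "\<And>l e b. l < K \<Longrightarrow> e \<in> {1..E l} \<Longrightarrow> b < N l \<Longrightarrow> norm (f l e b) \<le> M"
    and "M \<ge> 0"
  shows "norm (aggregate \<omega> f) \<le> (\<Sum>l<K. real (E l) * real (N l)) * total_scale * M"
proof -
  have summand_le: "norm ((agent_scale l * sample_scale l b) *\<^sub>R f l e b) \<le> total_scale * M"
    if "l < K" "e \<in> {1..E l}" "b < N l" for l e b
  proof -
    have "norm ((agent_scale l * sample_scale l b) *\<^sub>R f l e b) = agent_scale l * sample_scale l b * norm (f l e b)"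
      using scale_product_nonneg[OF that(1,3)] by simp
    also have "\<dots> \<le> total_scale * M"
      using that scale_product_le_total total_scale_nonneg bound by (intro mult_mono) auto
    finally show ?thesis .
  qed
  have term_le: "norm (agent_scale l *\<^sub>R (\<Sum>e\<in>{1..E l}. \<Sum>b\<in>snd \<omega> (l, e). sample_scale l b *\<^sub>R f l e b))
      \<le> real (E l) * real (N l) * (total_scale * M)" if l: "l < K" for l
  proof -
    have "norm (agent_scale l *\<^sub>R (\<Sum>e\<in>{1..E l}. \<Sum>b\<in>snd \<omega> (l, e). sample_scale l b *\<^sub>R f l e b))
        = norm (\<Sum>e\<in>{1..E l}. \<Sum>b\<in>snd \<omega> (l, e). (agent_scale l * sample_scale l b) *\<^sub>R f l e b)"
      by (simp add: scaleR_sum_right)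
    also have "\<dots> \<le> (\<Sum>e\<in>{1..E l}. \<Sum>b\<in>snd \<omega> (l, e). norm ((agent_scale l * sample_scale l b) *\<^sub>R f l e b))"
      by (rule order_trans[OF norm_sum]) (intro sum_mono norm_sum)
    also have "\<dots> \<le> (\<Sum>e\<in>{1..E l}. \<Sum>b\<in>snd \<omega> (l, e). total_scale * M)"
      by (intro sum_mono summand_le[OF l]) (use batches[OF l] in auto)
    also have "\<dots> \<le> (\<Sum>e\<in>{1..E l}. \<Sum>b<N l. total_scale * M)"
      using batches[OF l] total_scale_nonneg \<open>M \<ge> 0\<close> by (intro sum_mono sum_mono2) auto
    finally show ?thesis by simp
  qed
  have "norm (aggregate \<omega> f) = (1 / real L) *
      norm (\<Sum>l\<in>fst \<omega>. agent_scale l *\<^sub>R (\<Sum>e\<in>{1..E l}. \<Sum>b\<in>snd \<omega> (l, e). sample_scale l b *\<^sub>R f l e b))"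
    by (simp add: aggregate_def)
  also have "\<dots> \<le> norm (\<Sum>l\<in>fst \<omega>. agent_scale l *\<^sub>R (\<Sum>e\<in>{1..E l}. \<Sum>b\<in>snd \<omega> (l, e). sample_scale l b *\<^sub>R f l e b))"
    using sampled_pos by (intro mult_left_le_one_le) auto
  also have "\<dots> \<le> (\<Sum>l\<in>fst \<omega>. norm (agent_scale l *\<^sub>R (\<Sum>e\<in>{1..E l}. \<Sum>b\<in>snd \<omega> (l, e). sample_scale l b *\<^sub>R f l e b)))"
    by (rule norm_sum)
  also have "\<dots> \<le> (\<Sum>l\<in>fst \<omega>. real (E l) * real (N l) * (total_scale * M))"
    using agents term_le by (intro sum_mono) auto
  also have "\<dots> \<le> (\<Sum>l<K. real (E l) * real (N l) * (total_scale * M))"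
    using agents total_scale_nonneg \<open>M \<ge> 0\<close> by (intro sum_mono2) auto
  finally show ?thesis by (simp add: sum_distrib_right mult.assoc)
qed

lemma fedavg_local_minus_start:
  "fedavg_local \<mu> G k w bs e - w = - (\<mu> * agent_scale k) *\<^sub>R
     (\<Sum>e'\<in>{1..e}. \<Sum>b\<in>bs (k, e'). sample_scale k b *\<^sub>R G k b (fedavg_local \<mu> G k w bs (e' - 1)))"
proof (induction e)
  case (Suc e)
  have "fedavg_local \<mu> G k w bs (Suc e) - w = (fedavg_local \<mu> G k w bs e - w) - (\<mu> * agent_scale k) *\<^sub>R
      (\<Sum>b\<in>bs (k, Suc e). sample_scale k b *\<^sub>R G k b (fedavg_local \<mu> G k w bs e))"
    by (simp add: agent_scale_def sample_scale_def)
  then show ?case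
    by (simp add: Suc.IH sum.cl_ivl_Suc algebra_simps)
qed simp

lemma fedavg_step_minus_start:
  assumes "card (fst \<omega>) = L"
  shows "fedavg_step \<mu> G w \<omega> - w = (1 / real L) *\<^sub>R (\<Sum>l\<in>fst \<omega>. fedavg_local \<mu> G l w (snd \<omega>) (E l) - w)"
proof -
  have "w = (1 / real L) *\<^sub>R (\<Sum>l\<in>fst \<omega>. w)"
    using assms sampled_pos by (simp add: sum_constant_scaleR)
  then show ?thesis
    unfolding fedavg_next_def by (subst (2) \<open>w = _\<close>) (simp add: sum_subtractf scaleR_diff_right)
qed

lemma fedavg_noise_eq_aggregate:
  "fedavg_noise \<mu> G w \<omega>
     = aggregate \<omega> (\<lambda>l e b. G l b (fedavg_local \<mu> G l w (snd \<omega>) (e - 1)) - G l b w)"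
  by (simp add: incr_noise_def aggregate_def agent_scale_def sample_scale_def)

lemma fedavg_step_decomp:
  assumes "card (fst \<omega>) = L"
  shows "fedavg_step \<mu> G w \<omega> = w - \<mu> *\<^sub>R (aggregate \<omega> (\<lambda>l e b. G l b w) + fedavg_noise \<mu> G w \<omega>)"
proof -
  have "fedavg_step \<mu> G w \<omega> - w = - \<mu> *\<^sub>R aggregate \<omega> (\<lambda>l e b. G l b (fedavg_local \<mu> G l w (snd \<omega>) (e - 1)))"
    unfolding fedavg_step_minus_start[OF assms] fedavg_local_minus_start aggregate_def
    by (simp add: scaleR_sum_right mult.assoc)
  then show ?thesis
    unfolding fedavg_noise_eq_aggregate aggregate_diff by (simp add: algebra_simps)
qed

text \<open>\<open>\<bar>\<delta>\<bar>\<close> because \<open>\<delta> \<ge> 0\<close> only follows from the Lipschitz assumption of an instance,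
  while this step-size bound must not depend on one.\<close>
definition mu_stable :: real where
  "mu_stable = 1 / (1 + total_scale * total_samples * \<bar>\<delta>\<bar>)"

definition drift_const :: real where
  "drift_const = 2 ^ (\<Sum>k<K. E k) * total_scale"

definition noise_const :: real where
  "noise_const = (\<Sum>l<K. real (E l) * real (N l)) * total_scale * \<delta> * drift_const"

definition sigma_weight :: real where
  "sigma_weight = (\<Sum>k<K. real (B k) * (real (N k))\<^sup>2 / 3)"

definition noise_coeff_dist :: real where
  "noise_coeff_dist = mu_stable * noise_const\<^sup>2 * (4 * (total_samples * \<delta>)\<^sup>2)"

definition noise_coeff_sigma :: real where
  "noise_coeff_sigma = noise_const\<^sup>2 * (2 * total_samples * real K * sigma_weight)"

lemma mu_stable_pos: "mu_stable > 0"
  unfolding mu_stable_def using total_scale_nonneg total_samples_nonneg by (simp add: add_pos_nonneg)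

lemma mu_stable_le:
  assumes "0 \<le> \<mu>" "\<mu> \<le> mu_stable"
  shows "\<mu> * (total_scale * total_samples * \<bar>\<delta>\<bar>) \<le> 1"
proof -
  have c: "total_scale * total_samples * \<bar>\<delta>\<bar> \<ge> 0"
    using total_scale_nonneg total_samples_nonneg by simp
  with assms have "\<mu> * (1 + total_scale * total_samples * \<bar>\<delta>\<bar>) \<le> 1"
    by (simp add: mu_stable_def pos_le_divide_eq)
  with assms c show ?thesis by (simp add: algebra_simps)
qed

lemma drift_const_nonneg: "drift_const \<ge> 0"
  unfolding drift_const_def using total_scale_nonneg by simp

lemma sigma_weight_nonneg: "sigma_weight \<ge> 0"
  unfolding sigma_weight_def by (simp add: sum_nonneg)

lemma noise_coeff_dist_nonneg: "noise_coeff_dist \<ge> 0"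
  unfolding noise_coeff_dist_def using mu_stable_pos by simp

lemma noise_coeff_sigma_nonneg: "noise_coeff_sigma \<ge> 0"
  unfolding noise_coeff_sigma_def using total_samples_nonneg sigma_weight_nonneg by simp

end

section \<open>Drift of the local models and size of the noise\<close>

locale fedavg_instance = fedavg_params +
  fixes \<nu> :: real and Q :: "nat \<Rightarrow> 'a::euclidean_space \<Rightarrow> 'x \<Rightarrow> real" and grad :: "nat \<Rightarrow> 'a \<Rightarrow> 'x \<Rightarrow> 'a"
    and x :: "nat \<Rightarrow> nat \<Rightarrow> 'x" and \<xi> :: real and wo :: 'a and wko :: "nat \<Rightarrow> 'a"
    and asel :: "nat set pmf" and bsel :: "nat \<Rightarrow> nat set pmf"
  assumes setting: "instance_assms K L p N B pn \<delta> \<nu> Q grad x \<xi> wo wko asel bsel"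
    and strong_convexity_pos: "\<nu> > 0"
begin

abbreviation "G \<equiv> \<lambda>k n w. grad k w (x k n)"
abbreviation "round_law \<equiv> round_pmf K E asel bsel"
abbreviation "batches_law \<equiv> Pi_pmf (SIGMA k:{..<K}. {1..E k}) {} (\<lambda>(k, e). bsel k)"

lemma grad_lipschitz: "k < K \<Longrightarrow> n < N k \<Longrightarrow> norm (G k n v - G k n u) \<le> \<delta> * norm (v - u)"
  using setting unfolding instance_assms_def lipschitz_on_def dist_norm by blast

lemma lipschitz_const_nonneg: "\<delta> \<ge> 0"
  using setting agents_pos samples_pos[of 0] unfolding instance_assms_def lipschitz_on_def by force

lemma agent_design: "agent_design K L p asel"
  using setting by (simp add: instance_assms_def)

lemma batch_design: "k < K \<Longrightarrow> batch_design (N k) (B k) (pn k) (bsel k)"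
  using setting by (simp add: instance_assms_def)

lemma finite_agents_law: "finite (set_pmf asel)"
proof -
  have "set_pmf asel \<subseteq> Pow {..<K}"
    using agent_design unfolding agent_design_def by auto
  then show ?thesis by (rule finite_subset) simp
qed

lemma finite_batch_law: "k < K \<Longrightarrow> finite (set_pmf (bsel k))"
proof -
  assume "k < K"
  then have "set_pmf (bsel k) \<subseteq> Pow {..<N k}"
    using batch_design unfolding batch_design_def by auto
  then show ?thesis by (rule finite_subset) simp
qed

lemma finite_batches_law: "finite (set_pmf batches_law)"
  using finite_batch_law by (subst set_Pi_pmf) (auto intro!: finite_PiE_dflt)

lemma round_law_eq: "round_law = pair_pmf asel batches_law"
  unfolding round_pmf_def by simp

lemma finite_round_law: "finite (set_pmf round_law)"
  unfolding round_law_eq using finite_agents_law finite_batches_law by simp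

lemma round_agents:
  assumes "\<omega> \<in> set_pmf round_law"
  shows "fst \<omega> \<subseteq> {..<K}" "card (fst \<omega>) = L"
proof -
  have "fst \<omega> \<in> set_pmf asel"
    using assms unfolding round_law_eq by auto
  then show "fst \<omega> \<subseteq> {..<K}" "card (fst \<omega>) = L"
    using agent_design unfolding agent_design_def by auto
qed

lemma round_batches:
  assumes "\<omega> \<in> set_pmf round_law" "k < K" "e \<in> {1..E k}"
  shows "snd \<omega> (k, e) \<subseteq> {..<N k}"
proof -
  have "snd \<omega> (k, e) \<in> set_pmf (bsel k)"
    using assms unfolding round_law_eq set_pair_pmf set_Pi_pmf[OF finite_SigmaI[OF finite_lessThan finite_atLeastAtMost]]
    by (auto simp: PiE_dflt_def)
  then show ?thesis
    using batch_design[OF assms(2)] unfolding batch_design_def by auto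
qed

definition grad_mass :: "'a \<Rightarrow> real" where
  "grad_mass w = (\<Sum>k<K. \<Sum>n<N k. norm (G k n w))"

lemma grad_mass_nonneg: "grad_mass w \<ge> 0"
  unfolding grad_mass_def by (simp add: sum_nonneg)

lemma agent_grad_mass_le: "k < K \<Longrightarrow> (\<Sum>n<N k. norm (G k n w)) \<le> grad_mass w"
  unfolding grad_mass_def
  by (intro member_le_sum[where f="\<lambda>k. \<Sum>n<N k. norm (G k n w)"]) (auto intro: sum_nonneg)

lemma norm_local_update_le:
  assumes k: "k < K" and mu: "0 \<le> \<mu>" "\<mu> \<le> mu_stable" and batch: "X \<subseteq> {..<N k}"
  shows "norm ((\<mu> * agent_scale k) *\<^sub>R (\<Sum>b\<in>X. sample_scale k b *\<^sub>R G k b w))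
    \<le> \<mu> * total_scale * grad_mass v + norm (w - v)"
proof -
  have grad_le: "agent_scale k * sample_scale k n * norm (G k n w)
      \<le> total_scale * (norm (G k n v) + \<delta> * norm (w - v))" if "n < N k" for n
  proof -
    have "norm (G k n w) \<le> norm (G k n v) + \<delta> * norm (w - v)"
      using norm_triangle_sub[of "G k n w" "G k n v"] grad_lipschitz[OF k that, of w v] by simp
    then show ?thesis
      using scale_product_le_total[OF k that] scale_product_nonneg[OF k that] by (intro mult_mono) auto
  qed
  have "norm (\<Sum>b\<in>X. sample_scale k b *\<^sub>R G k b w) \<le> (\<Sum>b\<in>X. sample_scale k b * norm (G k b w))"
    using sample_scale_pos[OF k] batch
    by (intro order_trans[OF norm_sum] sum_mono) (auto simp: less_imp_le subset_iff)
  then have "norm ((\<mu> * agent_scale k) *\<^sub>R (\<Sum>b\<in>X. sample_scale k b *\<^sub>R G k b w))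
      \<le> \<mu> * (agent_scale k * (\<Sum>b\<in>X. sample_scale k b * norm (G k b w)))"
    using mu agent_scale_pos[OF k] by (simp add: mult_left_mono mult.assoc)
  also have "\<dots> = \<mu> * (\<Sum>b\<in>X. agent_scale k * sample_scale k b * norm (G k b w))"
    by (simp add: sum_distrib_left mult.assoc)
  also have "\<dots> \<le> \<mu> * (\<Sum>n<N k. total_scale * (norm (G k n v) + \<delta> * norm (w - v)))"
    using mu batch grad_le scale_product_nonneg[OF k]
    by (intro mult_left_mono order_trans[OF sum_mono2 sum_mono]) auto
  also have "\<dots> = \<mu> * total_scale * (\<Sum>n<N k. norm (G k n v)) + \<mu> * (total_scale * real (N k) * \<delta>) * norm (w - v)"
    by (simp add: sum.distrib sum_distrib_left algebra_simps)
  also have "\<dots> \<le> \<mu> * total_scale * grad_mass v + \<mu> * (total_scale * total_samples * \<delta>) * norm (w - v)"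
    using mu total_scale_nonneg lipschitz_const_nonneg agent_grad_mass_le[OF k, of v] samples_le_total[OF k]
    by (intro add_mono mult_left_mono mult_right_mono) auto
  also have "\<dots> \<le> \<mu> * total_scale * grad_mass v + norm (w - v)"
    using mu_stable_le[OF mu] lipschitz_const_nonneg mu total_scale_nonneg total_samples_nonneg
    by (intro add_left_mono mult_left_le_one_le) auto
  finally show ?thesis .
qed

lemma fedavg_local_drift:
  assumes k: "k < K" and mu: "0 \<le> \<mu>" "\<mu> \<le> mu_stable"
    and batches: "\<forall>e'\<in>{1..e}. bs (k, e') \<subseteq> {..<N k}"
  shows "norm (fedavg_local \<mu> G k v bs e - v) \<le> (2 ^ e - 1) * \<mu> * total_scale * grad_mass v"
  using batches
proof (induction e)
  case (Suc e)
  define w where "w = fedavg_local \<mu> G k v bs e"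
  define update where "update = (\<mu> * agent_scale k) *\<^sub>R (\<Sum>b\<in>bs (k, Suc e). sample_scale k b *\<^sub>R G k b w)"
  have "fedavg_local \<mu> G k v bs (Suc e) - v = (w - v) - update"
    by (simp add: w_def update_def agent_scale_def sample_scale_def)
  then have "norm (fedavg_local \<mu> G k v bs (Suc e) - v) \<le> norm (w - v) + norm update"
    by (simp only: norm_triangle_ineq4)
  moreover have "norm update \<le> \<mu> * total_scale * grad_mass v + norm (w - v)"
    unfolding update_def using Suc.prems by (intro norm_local_update_le[OF k mu]) auto
  moreover have "norm (w - v) \<le> (2 ^ e - 1) * \<mu> * total_scale * grad_mass v"
    using Suc by (simp add: w_def)
  ultimately show ?case
    by (simp add: algebra_simps)
qed simp

lemma fedavg_local_drift_le:
  assumes "\<omega> \<in> set_pmf round_law" "k < K" "e \<le> E k" "0 \<le> \<mu>" "\<mu> \<le> mu_stable"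
  shows "norm (fedavg_local \<mu> G k v (snd \<omega>) e - v) \<le> \<mu> * drift_const * grad_mass v"
proof -
  have "(2::real) ^ e \<le> 2 ^ (\<Sum>k<K. E k)"
    using assms(2,3) member_le_sum[of k "{..<K}" E] by (intro power_increasing) auto
  then have "(2::real) ^ e - 1 \<le> 2 ^ (\<Sum>k<K. E k)"
    by linarith
  then have "(2 ^ e - 1) * (\<mu> * total_scale * grad_mass v) \<le> 2 ^ (\<Sum>k<K. E k) * (\<mu> * total_scale * grad_mass v)"
    using assms(4) total_scale_nonneg grad_mass_nonneg by (intro mult_right_mono) auto
  then have "(2 ^ e - 1) * \<mu> * total_scale * grad_mass v \<le> \<mu> * drift_const * grad_mass v"
    by (simp add: drift_const_def mult_ac)
  moreover have "\<forall>e'\<in>{1..e}. snd \<omega> (k, e') \<subseteq> {..<N k}"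
    using round_batches[OF assms(1,2)] assms(3) by auto
  ultimately show ?thesis
    using fedavg_local_drift[OF assms(2,4,5)] by (meson order_trans)
qed

lemma norm_fedavg_step_le:
  assumes "\<omega> \<in> set_pmf round_law" "0 \<le> \<mu>" "\<mu> \<le> mu_stable"
  shows "norm (fedavg_step \<mu> G v \<omega> - v) \<le> \<mu> * drift_const * grad_mass v"
proof -
  have "norm (fedavg_step \<mu> G v \<omega> - v)
      \<le> (1 / real L) * (\<Sum>l\<in>fst \<omega>. norm (fedavg_local \<mu> G l v (snd \<omega>) (E l) - v))"
    unfolding fedavg_step_minus_start[OF round_agents(2)[OF assms(1)]]
    by (simp add: norm_sum divide_right_mono)
  also have "\<dots> \<le> (1 / real L) * (\<Sum>l\<in>fst \<omega>. \<mu> * drift_const * grad_mass v)"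
    using round_agents(1)[OF assms(1)] fedavg_local_drift_le[OF assms(1) _ _ assms(2,3)]
    by (intro mult_left_mono sum_mono) auto
  also have "\<dots> = \<mu> * drift_const * grad_mass v"
    using round_agents(2)[OF assms(1)] sampled_pos by simp
  finally show ?thesis .
qed

lemma norm_fedavg_noise_le:
  assumes "\<omega> \<in> set_pmf round_law" "0 \<le> \<mu>" "\<mu> \<le> mu_stable"
  shows "norm (fedavg_noise \<mu> G v \<omega>) \<le> \<mu> * noise_const * grad_mass v"
proof -
  have "norm (G l b (fedavg_local \<mu> G l v (snd \<omega>) (e - 1)) - G l b v) \<le> \<delta> * (\<mu> * drift_const * grad_mass v)"
    if "l < K" "e \<in> {1..E l}" "b < N l" for l e b
  proof -
    have "norm (G l b (fedavg_local \<mu> G l v (snd \<omega>) (e - 1)) - G l b v)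
        \<le> \<delta> * norm (fedavg_local \<mu> G l v (snd \<omega>) (e - 1) - v)"
      using that by (intro grad_lipschitz) auto
    also have "\<dots> \<le> \<delta> * (\<mu> * drift_const * grad_mass v)"
      using that fedavg_local_drift_le[OF assms(1) \<open>l < K\<close> _ assms(2,3), of "e - 1" v] lipschitz_const_nonneg
      by (intro mult_left_mono) auto
    finally show ?thesis .
  qed
  then have "norm (fedavg_noise \<mu> G v \<omega>)
      \<le> (\<Sum>l<K. real (E l) * real (N l)) * total_scale * (\<delta> * (\<mu> * drift_const * grad_mass v))"
    unfolding fedavg_noise_eq_aggregate
    using round_agents(1)[OF assms(1)] round_batches[OF assms(1)] lipschitz_const_nonneg
      assms(2) drift_const_nonneg grad_mass_nonneg
    by (intro norm_aggregate_le) auto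
  then show ?thesis
    by (simp add: noise_const_def mult_ac)
qed

lemma local_opt_dist_le: "k < K \<Longrightarrow> norm (wko k - wo) \<le> \<xi>"
  using setting by (simp add: instance_assms_def)

definition opt_grad_energy :: real where
  "opt_grad_energy = (\<Sum>k<K. \<Sum>n<N k. (norm (G k n (wko k)))\<^sup>2)"

definition grad_mass_offset :: real where
  "grad_mass_offset = 4 * (total_samples * \<delta>)\<^sup>2 * \<xi>\<^sup>2 + 2 * total_samples * opt_grad_energy"

abbreviation "sigma_avg \<equiv> (1 / real K) * (\<Sum>k<K. sigma_q2 N B pn G wko k)"

lemma grad_mass_le:
  "grad_mass w \<le> total_samples * \<delta> * (norm (w - wo) + \<xi>) + (\<Sum>k<K. \<Sum>n<N k. norm (G k n (wko k)))"
proof -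
  have "norm (G k n w) \<le> \<delta> * (norm (w - wo) + \<xi>) + norm (G k n (wko k))" if "k < K" "n < N k" for k n
  proof -
    have "norm (w - wko k) \<le> norm (w - wo) + \<xi>"
      using norm_triangle_ineq4[of "w - wo" "wko k - wo"] local_opt_dist_le[OF that(1)] by simp
    then have "\<delta> * norm (w - wko k) \<le> \<delta> * (norm (w - wo) + \<xi>)"
      using lipschitz_const_nonneg by (rule mult_left_mono)
    then show ?thesis
      using norm_triangle_sub[of "G k n w" "G k n (wko k)"] grad_lipschitz[OF that, of w "wko k"] by simp
  qed
  then have "grad_mass w \<le> (\<Sum>k<K. \<Sum>n<N k. \<delta> * (norm (w - wo) + \<xi>) + norm (G k n (wko k)))"
    unfolding grad_mass_def by (intro sum_mono) auto
  also have "\<dots> = total_samples * (\<delta> * (norm (w - wo) + \<xi>)) + (\<Sum>k<K. \<Sum>n<N k. norm (G k n (wko k)))"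
    by (simp add: total_samples_def sum.distrib sum_distrib_right)
  finally show ?thesis
    by (simp add: mult.assoc)
qed

lemma opt_grad_mass_sq_le: "(\<Sum>k<K. \<Sum>n<N k. norm (G k n (wko k)))\<^sup>2 \<le> total_samples * opt_grad_energy"
proof -
  let ?I = "SIGMA k:{..<K}. {..<N k}"
  have "(\<Sum>(k, n)\<in>?I. norm (G k n (wko k)))\<^sup>2 \<le> card ?I * (\<Sum>(k, n)\<in>?I. (norm (G k n (wko k)))\<^sup>2)"
    using sum_squared_le_sum_of_squares[of "\<lambda>(k, n). norm (G k n (wko k))" ?I]
    by (simp add: case_prod_beta mult.commute)
  then show ?thesis
    by (simp add: opt_grad_energy_def total_samples_def card_SigmaI sum.Sigma[symmetric])
qed

lemma grad_mass_sq_le: "(grad_mass w)\<^sup>2 \<le> 4 * (total_samples * \<delta>)\<^sup>2 * (norm (w - wo))\<^sup>2 + grad_mass_offset"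
proof -
  define a where "a = total_samples * \<delta> * (norm (w - wo) + \<xi>)"
  define g where "g = (\<Sum>k<K. \<Sum>n<N k. norm (G k n (wko k)))"
  have "(grad_mass w)\<^sup>2 \<le> (a + g)\<^sup>2"
    using grad_mass_le[of w] grad_mass_nonneg[of w] unfolding a_def g_def by (intro power_mono) auto
  also have "\<dots> \<le> 2 * a\<^sup>2 + 2 * g\<^sup>2"
    using sum_squares_bound[of a g] by (simp add: power2_sum)
  also have "a\<^sup>2 \<le> (total_samples * \<delta>)\<^sup>2 * (2 * (norm (w - wo))\<^sup>2 + 2 * \<xi>\<^sup>2)"
    using sum_squares_bound[of "norm (w - wo)" \<xi>] unfolding a_def
    by (simp add: power_mult_distrib power2_sum mult_left_mono)
  also have "g\<^sup>2 \<le> total_samples * opt_grad_energy"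
    unfolding g_def by (rule opt_grad_mass_sq_le)
  finally show ?thesis
    by (simp add: grad_mass_offset_def algebra_simps)
qed

lemma sigma_q2_nonneg:
  assumes "k < K"
  shows "sigma_q2 N B pn G wko k \<ge> 0"
proof -
  have "0 \<le> (\<Sum>n<N k. 1 / pn k n * (norm (G k n (wko k)))\<^sup>2)"
    using sample_prob assms by (intro sum_nonneg) (simp add: less_imp_le)
  then show ?thesis
    unfolding sigma_q2_def by simp
qed

lemma sigma_avg_nonneg: "sigma_avg \<ge> 0"
  by (intro mult_nonneg_nonneg sum_nonneg sigma_q2_nonneg) auto

lemma opt_grad_energy_nonneg: "opt_grad_energy \<ge> 0"
  unfolding opt_grad_energy_def by (simp add: sum_nonneg)

lemma grad_mass_offset_nonneg: "grad_mass_offset \<ge> 0"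
  unfolding grad_mass_offset_def using total_samples_nonneg opt_grad_energy_nonneg by simp

lemma opt_grad_energy_le: "opt_grad_energy \<le> real K * sigma_weight * sigma_avg"
proof -
  have agent_le: "(\<Sum>n<N k. (norm (G k n (wko k)))\<^sup>2) \<le> real (B k) * (real (N k))\<^sup>2 / 3 * sigma_q2 N B pn G wko k"
    if k: "k < K" for k
  proof -
    have "(norm (G k n (wko k)))\<^sup>2 \<le> 1 / pn k n * (norm (G k n (wko k)))\<^sup>2" if "n < N k" for n
    proof -
      have "pn k n \<le> (\<Sum>n<N k. pn k n)"
        using sample_prob k that by (intro member_le_sum) (auto simp: less_imp_le)
      with sample_prob k that have "1 \<le> 1 / pn k n"
        by simp
      then show ?thesis
        using mult_right_mono[of 1 "1 / pn k n" "(norm (G k n (wko k)))\<^sup>2"] by simp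
    qed
    then have "(\<Sum>n<N k. (norm (G k n (wko k)))\<^sup>2) \<le> (\<Sum>n<N k. 1 / pn k n * (norm (G k n (wko k)))\<^sup>2)"
      by (intro sum_mono) auto
    also have "\<dots> = real (B k) * (real (N k))\<^sup>2 / 3 * sigma_q2 N B pn G wko k"
    proof -
      have "real (B k) > 0" "real (N k) > 0"
        using epochs_batches samples_pos[OF k] k by auto
      then show ?thesis
        unfolding sigma_q2_def by (simp add: field_simps)
    qed
    finally show ?thesis .
  qed
  have "opt_grad_energy \<le> (\<Sum>k<K. real (B k) * (real (N k))\<^sup>2 / 3 * sigma_q2 N B pn G wko k)"
    unfolding opt_grad_energy_def using agent_le by (intro sum_mono) auto
  also have "\<dots> \<le> (\<Sum>k<K. sigma_weight * sigma_q2 N B pn G wko k)"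
    unfolding sigma_weight_def using sigma_q2_nonneg
    by (intro sum_mono mult_right_mono member_le_sum[where f="\<lambda>k. real (B k) * (real (N k))\<^sup>2 / 3"]) auto
  also have "\<dots> = real K * sigma_weight * sigma_avg"
    using agents_pos by (simp add: sum_distrib_left)
  finally show ?thesis .
qed

lemma expected_noise_sq_le:
  assumes "0 \<le> \<mu>" "\<mu> \<le> mu_stable"
  shows "measure_pmf.expectation round_law (\<lambda>\<omega>. (norm (fedavg_noise \<mu> G v \<omega>))\<^sup>2)
     \<le> noise_coeff_dist * \<mu> * (norm (wo - v))\<^sup>2 + noise_coeff_dist * \<mu> * \<xi>\<^sup>2
       + noise_coeff_sigma * \<mu>\<^sup>2 * sigma_avg"
proof -
  define c where "c = \<mu>\<^sup>2 * noise_const\<^sup>2 * (4 * (total_samples * \<delta>)\<^sup>2)"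
  have "measure_pmf.expectation round_law (\<lambda>\<omega>. (norm (fedavg_noise \<mu> G v \<omega>))\<^sup>2)
      \<le> measure_pmf.expectation round_law (\<lambda>\<omega>. (\<mu> * noise_const * grad_mass v)\<^sup>2)"
    using norm_fedavg_noise_le[OF _ assms] by (intro expectation_mono_pmf_finite finite_round_law power_mono) auto
  also have "\<dots> = \<mu>\<^sup>2 * noise_const\<^sup>2 * (grad_mass v)\<^sup>2"
    by (simp add: power_mult_distrib)
  also have "\<dots> \<le> \<mu>\<^sup>2 * noise_const\<^sup>2 * (4 * (total_samples * \<delta>)\<^sup>2 * ((norm (wo - v))\<^sup>2 + \<xi>\<^sup>2)
      + 2 * total_samples * (real K * sigma_weight * sigma_avg))"
  proof (intro mult_left_mono)
    have "2 * total_samples * opt_grad_energy \<le> 2 * total_samples * (real K * sigma_weight * sigma_avg)"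
      using total_samples_nonneg by (intro mult_left_mono opt_grad_energy_le) simp
    then show "(grad_mass v)\<^sup>2 \<le> 4 * (total_samples * \<delta>)\<^sup>2 * ((norm (wo - v))\<^sup>2 + \<xi>\<^sup>2)
        + 2 * total_samples * (real K * sigma_weight * sigma_avg)"
      using grad_mass_sq_le[of v] unfolding grad_mass_offset_def by (simp add: norm_minus_commute algebra_simps)
  qed simp
  also have "\<dots> = c * (norm (wo - v))\<^sup>2 + c * \<xi>\<^sup>2 + noise_coeff_sigma * \<mu>\<^sup>2 * sigma_avg"
    by (simp add: c_def noise_coeff_sigma_def algebra_simps)
  also have "\<dots> \<le> noise_coeff_dist * \<mu> * (norm (wo - v))\<^sup>2 + noise_coeff_dist * \<mu> * \<xi>\<^sup>2
      + noise_coeff_sigma * \<mu>\<^sup>2 * sigma_avg"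
  proof -
    have "\<mu>\<^sup>2 \<le> \<mu> * mu_stable"
      using assms by (simp add: power2_eq_square mult_left_mono)
    then have "\<mu>\<^sup>2 * (noise_const\<^sup>2 * (4 * (total_samples * \<delta>)\<^sup>2))
        \<le> \<mu> * mu_stable * (noise_const\<^sup>2 * (4 * (total_samples * \<delta>)\<^sup>2))"
      by (rule mult_right_mono) simp
    then have "c \<le> noise_coeff_dist * \<mu>"
      unfolding c_def noise_coeff_dist_def by (simp add: mult_ac)
    then show ?thesis
      by (intro add_right_mono add_mono mult_right_mono) auto
  qed
  finally show ?thesis .
qed

lemma finite_iterates: "finite (set_pmf (iterates \<mu> K L p N E B pn G asel bsel w0 j))"
  by (induction j) (simp_all add: set_bind_pmf finite_round_law)

theorem noise_second_moment_le:
  assumes "0 \<le> \<mu>" "\<mu> \<le> mu_stable"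
  shows "measure_pmf.expectation (noise_pmf \<mu> K L p N E B pn G asel bsel w0 j) (\<lambda>q. (norm q)\<^sup>2)
     \<le> noise_coeff_dist * \<mu> * measure_pmf.expectation (iterates \<mu> K L p N E B pn G asel bsel w0 j)
           (\<lambda>w. (norm (wo - w))\<^sup>2)
       + noise_coeff_dist * \<mu> * \<xi>\<^sup>2 + noise_coeff_sigma * \<mu>\<^sup>2 * sigma_avg"
proof -
  define M where "M = iterates \<mu> K L p N E B pn G asel bsel w0 j"
  have "measure_pmf.expectation (noise_pmf \<mu> K L p N E B pn G asel bsel w0 j) (\<lambda>q. (norm q)\<^sup>2)
      = measure_pmf.expectation M (\<lambda>w. measure_pmf.expectation round_law (\<lambda>\<omega>. (norm (fedavg_noise \<mu> G w \<omega>))\<^sup>2))"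
    unfolding noise_pmf_def M_def
    by (simp add: expectation_bind_pmf_finite finite_iterates finite_round_law)
  also have "\<dots> \<le> measure_pmf.expectation M (\<lambda>w. (noise_coeff_dist * \<mu>) * (norm (wo - w))\<^sup>2
      + (noise_coeff_dist * \<mu> * \<xi>\<^sup>2 + noise_coeff_sigma * \<mu>\<^sup>2 * sigma_avg))"
    using expected_noise_sq_le[OF assms] unfolding M_def
    by (intro expectation_mono_pmf_finite finite_iterates) (simp add: add.assoc)
  also have "\<dots> = noise_coeff_dist * \<mu> * measure_pmf.expectation M (\<lambda>w. (norm (wo - w))\<^sup>2)
      + noise_coeff_dist * \<mu> * \<xi>\<^sup>2 + noise_coeff_sigma * \<mu>\<^sup>2 * sigma_avg"
    unfolding M_def by (simp add: expectation_affine_pmf_finite[OF finite_iterates] add.assoc)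
  finally show ?thesis
    unfolding M_def .
qed


section \<open>Unbiasedness and mean-square stability\<close>

lemma expectation_agent_sum:
  fixes f :: "nat \<Rightarrow> 'b::{banach, second_countable_topology}"
  shows "measure_pmf.expectation asel (\<lambda>S. \<Sum>l\<in>S. f l) = (\<Sum>l<K. (real L * p l) *\<^sub>R f l)"
  using agent_design unfolding agent_design_def
  by (subst expectation_sum_random_subset[of "{..<K}"]) auto

lemma expectation_batch_sum:
  fixes f :: "nat \<Rightarrow> 'b::{banach, second_countable_topology}"
  assumes "k < K"
  shows "measure_pmf.expectation (bsel k) (\<lambda>X. \<Sum>b\<in>X. f b) = (\<Sum>n<N k. (real (B k) * pn k n) *\<^sub>R f n)"
  using batch_design[OF assms] unfolding batch_design_def
  by (subst expectation_sum_random_subset[of "{..<N k}"]) auto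

lemma expectation_batches_component:
  fixes g :: "nat set \<Rightarrow> 'b::{banach, second_countable_topology}"
  assumes "k < K" "e \<in> {1..E k}"
  shows "measure_pmf.expectation batches_law (\<lambda>bs. g (bs (k, e))) = measure_pmf.expectation (bsel k) g"
proof -
  have "map_pmf (\<lambda>bs. bs (k, e)) batches_law = bsel k"
    using assms by (subst Pi_pmf_component) auto
  then show ?thesis
    by (metis integral_map_pmf)
qed

lemma expectation_agent_estimate:
  fixes f :: "nat \<Rightarrow> nat \<Rightarrow> 'b::{banach, second_countable_topology}"
  assumes l: "l < K"
  shows "measure_pmf.expectation batches_law
      (\<lambda>bs. agent_scale l *\<^sub>R (\<Sum>e\<in>{1..E l}. \<Sum>b\<in>bs (l, e). sample_scale l b *\<^sub>R f l b))
    = (1 / (real K * p l * real (N l))) *\<^sub>R (\<Sum>n<N l. f l n)"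
proof -
  have int: "integrable batches_law h" for h :: "_ \<Rightarrow> 'b"
    by (rule integrable_measure_pmf_finite[OF finite_batches_law])
  have "measure_pmf.expectation batches_law
      (\<lambda>bs. agent_scale l *\<^sub>R (\<Sum>e\<in>{1..E l}. \<Sum>b\<in>bs (l, e). sample_scale l b *\<^sub>R f l b))
    = agent_scale l *\<^sub>R (\<Sum>e\<in>{1..E l}. measure_pmf.expectation batches_law
        (\<lambda>bs. \<Sum>b\<in>bs (l, e). sample_scale l b *\<^sub>R f l b))"
    \<comment> \<open>\<open>simp\<close> would rewrite \<open>{1..E k}\<close> inside \<open>batches_law\<close> and then miss \<open>int\<close>\<close>
    by (simp only: integral_scaleR_right Bochner_Integration.integral_sum int)
  also have "\<dots> = agent_scale l *\<^sub>R (\<Sum>e\<in>{1..E l}. \<Sum>n<N l. (real (B l) * pn l n * sample_scale l n) *\<^sub>R f l n)"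
  proof -
    have "measure_pmf.expectation batches_law (\<lambda>bs. \<Sum>b\<in>bs (l, e). sample_scale l b *\<^sub>R f l b)
        = (\<Sum>n<N l. (real (B l) * pn l n * sample_scale l n) *\<^sub>R f l n)" if "e \<in> {1..E l}" for e
      by (simp only: expectation_batches_component[OF l that] expectation_batch_sum[OF l] scaleR_scaleR)
    then show ?thesis
      by simp
  qed
  also have "\<dots> = (1 / (real K * p l * real (N l))) *\<^sub>R (\<Sum>n<N l. f l n)"
  proof -
    have "E l \<ge> 1" "B l \<ge> 1" "p l > 0"
      using epochs_batches agent_prob_pos l by auto
    then have scale: "agent_scale l * (real (E l) * real (B l)) / real (N l) = 1 / (real K * p l * real (N l))"
      by (simp add: agent_scale_def)
    have "real (B l) * pn l n * sample_scale l n = real (B l) / real (N l)" if "n < N l" for n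
    proof -
      have "pn l n > 0"
        using sample_prob l that by simp
      then show ?thesis
        by (simp add: sample_scale_def)
    qed
    then have "(\<Sum>e\<in>{1..E l}. \<Sum>n<N l. (real (B l) * pn l n * sample_scale l n) *\<^sub>R f l n)
        = real (E l) *\<^sub>R (\<Sum>n<N l. (real (B l) / real (N l)) *\<^sub>R f l n)"
      by (simp add: sum_constant_scaleR)
    then show ?thesis
      by (simp add: scaleR_sum_right scale)
  qed
  finally show ?thesis .
qed

lemma expectation_aggregate:
  fixes f :: "nat \<Rightarrow> nat \<Rightarrow> 'b::{banach, second_countable_topology}"
  shows "measure_pmf.expectation round_law (\<lambda>\<omega>. aggregate \<omega> (\<lambda>l e b. f l b))
    = (1 / real K) *\<^sub>R (\<Sum>k<K. (1 / real (N k)) *\<^sub>R (\<Sum>n<N k. f k n))"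
proof -
  define h where "h l = (1 / (real K * p l * real (N l))) *\<^sub>R (\<Sum>n<N l. f l n)" for l
  have "AE S in asel. measure_pmf.expectation batches_law (\<lambda>bs. aggregate (S, bs) (\<lambda>l e b. f l b))
      = (1 / real L) *\<^sub>R (\<Sum>l\<in>S. h l)"
    unfolding AE_measure_pmf_iff
  proof
    fix S assume "S \<in> set_pmf asel"
    have "S \<subseteq> {..<K}"
      using \<open>S \<in> set_pmf asel\<close> agent_design unfolding agent_design_def by auto
    then have "(\<Sum>l\<in>S. measure_pmf.expectation batches_law
        (\<lambda>bs. agent_scale l *\<^sub>R (\<Sum>e\<in>{1..E l}. \<Sum>b\<in>bs (l, e). sample_scale l b *\<^sub>R f l b)))
      = (\<Sum>l\<in>S. h l)"
      unfolding h_def by (intro sum.cong refl expectation_agent_estimate) auto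
    then show "measure_pmf.expectation batches_law (\<lambda>bs. aggregate (S, bs) (\<lambda>l e b. f l b))
        = (1 / real L) *\<^sub>R (\<Sum>l\<in>S. h l)"
      unfolding aggregate_def
      by (simp only: integral_scaleR_right Bochner_Integration.integral_sum
          integrable_measure_pmf_finite[OF finite_batches_law] fst_conv snd_conv)
  qed
  then have "measure_pmf.expectation round_law (\<lambda>\<omega>. aggregate \<omega> (\<lambda>l e b. f l b))
      = measure_pmf.expectation asel (\<lambda>S. (1 / real L) *\<^sub>R (\<Sum>l\<in>S. h l))"
    unfolding round_law_eq expectation_pair_pmf_finite[OF finite_agents_law finite_batches_law]
    by (intro integral_cong_AE) simp_all
  also have "\<dots> = (1 / real L) *\<^sub>R (\<Sum>l<K. (real L * p l) *\<^sub>R h l)"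
    by (simp add: integrable_measure_pmf_finite[OF finite_agents_law] expectation_agent_sum)
  also have "\<dots> = (1 / real K) *\<^sub>R (\<Sum>k<K. (1 / real (N k)) *\<^sub>R (\<Sum>n<N k. f k n))"
  proof -
    have "p k \<noteq> 0" if "k < K" for k
      using agent_prob_pos that by force
    then show ?thesis
      unfolding h_def scaleR_sum_right using sampled_pos by (intro sum.cong refl) simp
  qed
  finally show ?thesis .
qed

definition risk_grad :: "'a \<Rightarrow> 'a" where
  "risk_grad v = (1 / real K) *\<^sub>R (\<Sum>k<K. (1 / real (N k)) *\<^sub>R (\<Sum>n<N k. G k n v))"

lemma emp_risk_has_derivative:
  assumes "k < K"
  shows "(emp_risk N Q x k has_derivative (\<lambda>h. ((1 / real (N k)) *\<^sub>R (\<Sum>n<N k. G k n v)) \<bullet> h)) (at v)"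
proof -
  have "((\<lambda>w. Q k w (x k n)) has_derivative (\<lambda>h. G k n v \<bullet> h)) (at v)" if "n < N k" for n
    using setting assms that unfolding instance_assms_def by blast
  then have "((\<lambda>w. 1 / real (N k) * (\<Sum>n<N k. Q k w (x k n)))
      has_derivative (\<lambda>h. 1 / real (N k) * (\<Sum>n<N k. G k n v \<bullet> h))) (at v)"
    by (intro has_derivative_mult_right has_derivative_sum) auto
  then show ?thesis
    unfolding emp_risk_def by (simp add: inner_sum_left)
qed

lemma risk_grad_inner_ge: "(v - wo) \<bullet> risk_grad v \<ge> \<nu> / 2 * (norm (v - wo))\<^sup>2"
proof -
  define g where "g k = (1 / real (N k)) *\<^sub>R (\<Sum>n<N k. G k n v)" for k
  define c where "c = \<nu> / 2 * (norm (v - wo))\<^sup>2"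
  have "emp_risk N Q x k v + g k \<bullet> (wo - v) + c \<le> emp_risk N Q x k wo" if "k < K" for k
  proof -
    have "strongly_convex_fun \<nu> (emp_risk N Q x k)"
      using setting that unfolding instance_assms_def by blast
    from strongly_convex_above_tangent[OF this emp_risk_has_derivative[OF that]]
    show ?thesis
      by (simp add: g_def c_def norm_minus_commute)
  qed
  then have "(\<Sum>k<K. emp_risk N Q x k v + g k \<bullet> (wo - v) + c) \<le> (\<Sum>k<K. emp_risk N Q x k wo)"
    by (intro sum_mono) simp
  also have "\<dots> \<le> (\<Sum>k<K. emp_risk N Q x k v)"
  proof -
    have "(\<Sum>k<K. emp_risk N Q x k wo) / real K \<le> (\<Sum>k<K. emp_risk N Q x k v) / real K"
      using setting unfolding instance_assms_def by simp
    then show ?thesis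
      using agents_pos by (simp add: divide_le_cancel)
  qed
  finally have "(\<Sum>k<K. g k) \<bullet> (wo - v) + real K * c \<le> 0"
    by (simp add: sum.distrib inner_sum_left)
  moreover have "(\<Sum>k<K. g k) = real K *\<^sub>R risk_grad v"
    using agents_pos by (simp add: risk_grad_def g_def)
  moreover have "risk_grad v \<bullet> (wo - v) = - ((v - wo) \<bullet> risk_grad v)"
    by (simp add: inner_diff_left inner_diff_right inner_commute)
  ultimately have "real K * c \<le> real K * ((v - wo) \<bullet> risk_grad v)"
    by simp
  then show ?thesis
    using agents_pos by (simp add: c_def)
qed

definition dist_coeff :: real where
  "dist_coeff = noise_const + 4 * (noise_const + drift_const\<^sup>2) * (total_samples * \<delta>)\<^sup>2"

definition dist_offset :: real where
  "dist_offset = (noise_const + drift_const\<^sup>2) * grad_mass_offset"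

lemma noise_const_nonneg: "noise_const \<ge> 0"
  unfolding noise_const_def
  using total_scale_nonneg lipschitz_const_nonneg drift_const_nonneg by (simp add: sum_nonneg)

lemma sq_dist_fedavg_step_le:
  assumes \<omega>: "\<omega> \<in> set_pmf round_law" and mu: "0 \<le> \<mu>" "\<mu> \<le> mu_stable"
  shows "(norm (wo - fedavg_step \<mu> G v \<omega>))\<^sup>2
    \<le> (norm (wo - v))\<^sup>2 - 2 * \<mu> * ((v - wo) \<bullet> aggregate \<omega> (\<lambda>l e b. G l b v))
      + \<mu>\<^sup>2 * (dist_coeff * (norm (wo - v))\<^sup>2 + dist_offset)"
proof -
  define d where "d = v - wo"
  define s where "s = aggregate \<omega> (\<lambda>l e b. G l b v)"
  define q where "q = fedavg_noise \<mu> G v \<omega>"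
  define \<beta> where "\<beta> = noise_const"
  have step: "fedavg_step \<mu> G v \<omega> = v - \<mu> *\<^sub>R (s + q)"
    unfolding s_def q_def by (rule fedavg_step_decomp[OF round_agents(2)[OF \<omega>]])
  have "(norm (wo - fedavg_step \<mu> G v \<omega>))\<^sup>2 = (norm (d - \<mu> *\<^sub>R (s + q)))\<^sup>2"
    unfolding step d_def by (simp add: norm_minus_commute algebra_simps)
  also have "\<dots> \<le> (norm d)\<^sup>2 - 2 * \<mu> * (d \<bullet> s) + \<mu>\<^sup>2 * (\<beta> * (norm d)\<^sup>2 + (\<beta> + drift_const\<^sup>2) * (grad_mass v)\<^sup>2)"
    using norm_fedavg_noise_le[OF \<omega> mu, of v] norm_fedavg_step_le[OF \<omega> mu, of v] mu(1) noise_const_nonneg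
    unfolding step q_def \<beta>_def by (intro sq_norm_perturbed_step_le) (auto simp: norm_minus_commute)
  also have "\<dots> \<le> (norm d)\<^sup>2 - 2 * \<mu> * (d \<bullet> s) + \<mu>\<^sup>2 * (dist_coeff * (norm d)\<^sup>2 + dist_offset)"
  proof -
    have "(\<beta> + drift_const\<^sup>2) * (grad_mass v)\<^sup>2
        \<le> (\<beta> + drift_const\<^sup>2) * (4 * (total_samples * \<delta>)\<^sup>2 * (norm d)\<^sup>2 + grad_mass_offset)"
      using grad_mass_sq_le[of v] noise_const_nonneg unfolding \<beta>_def d_def
      by (intro mult_left_mono) auto
    moreover have "dist_coeff * (norm d)\<^sup>2 + dist_offset
        = \<beta> * (norm d)\<^sup>2 + (\<beta> + drift_const\<^sup>2) * (4 * (total_samples * \<delta>)\<^sup>2 * (norm d)\<^sup>2 + grad_mass_offset)"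
      by (simp add: dist_coeff_def dist_offset_def \<beta>_def algebra_simps)
    ultimately show ?thesis
      by (intro add_left_mono mult_left_mono) simp_all
  qed
  finally show ?thesis
    unfolding d_def s_def by (simp add: norm_minus_commute)
qed

lemma expected_sq_dist_step_le:
  assumes mu: "0 \<le> \<mu>" "\<mu> \<le> mu_stable" "\<mu> * dist_coeff \<le> \<nu> / 2"
  shows "measure_pmf.expectation round_law (\<lambda>\<omega>. (norm (wo - fedavg_step \<mu> G v \<omega>))\<^sup>2)
    \<le> (1 - \<mu> * \<nu> / 2) * (norm (wo - v))\<^sup>2 + \<mu>\<^sup>2 * dist_offset"
proof -
  define c where "c = (norm (wo - v))\<^sup>2 + \<mu>\<^sup>2 * (dist_coeff * (norm (wo - v))\<^sup>2 + dist_offset)"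
  have "measure_pmf.expectation round_law (\<lambda>\<omega>. (norm (wo - fedavg_step \<mu> G v \<omega>))\<^sup>2)
      \<le> measure_pmf.expectation round_law (\<lambda>\<omega>. (- 2 * \<mu>) * ((v - wo) \<bullet> aggregate \<omega> (\<lambda>l e b. G l b v)) + c)"
    using sq_dist_fedavg_step_le[OF _ mu(1,2)] unfolding c_def
    by (intro expectation_mono_pmf_finite finite_round_law) (simp add: algebra_simps)
  also have "\<dots> = (- 2 * \<mu>) * ((v - wo) \<bullet> risk_grad v) + c"
    by (simp add: expectation_affine_pmf_finite[OF finite_round_law] integrable_measure_pmf_finite[OF finite_round_law]
        expectation_aggregate risk_grad_def)
  also have "\<dots> \<le> (- 2 * \<mu>) * (\<nu> / 2 * (norm (wo - v))\<^sup>2) + c"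
  proof -
    have "\<nu> / 2 * (norm (wo - v))\<^sup>2 \<le> (v - wo) \<bullet> risk_grad v"
      using risk_grad_inner_ge[of v] by (simp add: norm_minus_commute)
    then show ?thesis
      using mu(1) by (intro add_right_mono mult_left_mono_neg) auto
  qed
  also have "\<dots> \<le> (1 - \<mu> * \<nu> / 2) * (norm (wo - v))\<^sup>2 + \<mu>\<^sup>2 * dist_offset"
  proof -
    have "\<mu> * (\<mu> * dist_coeff) * (norm (wo - v))\<^sup>2 \<le> \<mu> * (\<nu> / 2) * (norm (wo - v))\<^sup>2"
      using mu by (intro mult_right_mono mult_left_mono) auto
    then show ?thesis
      unfolding c_def by (simp add: power2_eq_square algebra_simps)
  qed
  finally show ?thesis .
qed

definition mu_contract :: real where
  "mu_contract = min mu_stable (min (\<nu> / (2 * dist_coeff + 1)) (1 / \<nu>))"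

text \<open>\<open>dist_radius w0\<close> is invariant under the recursion
  \<open>e' \<le> (1 - \<mu> \<nu> / 2) e + \<mu>\<^sup>2 dist_offset\<close> for every \<open>\<mu> \<le> mu_contract\<close>, which bounds the
  second moments of the distances of all iterates to \<open>wo\<close>.\<close>
definition dist_radius :: "'a \<Rightarrow> real" where
  "dist_radius w0 = max ((norm (wo - w0))\<^sup>2) (2 * mu_contract * dist_offset / \<nu>)"

lemma dist_offset_nonneg: "dist_offset \<ge> 0"
  unfolding dist_offset_def using noise_const_nonneg grad_mass_offset_nonneg by simp

lemma dist_coeff_nonneg: "dist_coeff \<ge> 0"
  unfolding dist_coeff_def using noise_const_nonneg by simp

lemma mu_contract_pos: "mu_contract > 0"
  unfolding mu_contract_def using mu_stable_pos dist_coeff_nonneg strong_convexity_pos by simp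

lemma mu_contract_le:
  assumes "0 < \<mu>" "\<mu> \<le> mu_contract"
  shows "\<mu> \<le> mu_stable" "\<mu> * dist_coeff \<le> \<nu> / 2" "\<mu> * \<nu> \<le> 1"
proof -
  show "\<mu> \<le> mu_stable"
    using assms unfolding mu_contract_def by simp
  have "\<mu> \<le> \<nu> / (2 * dist_coeff + 1)"
    using assms unfolding mu_contract_def by simp
  then have "\<mu> * (2 * dist_coeff + 1) \<le> \<nu>"
    using dist_coeff_nonneg by (simp add: pos_le_divide_eq)
  then show "\<mu> * dist_coeff \<le> \<nu> / 2"
    using assms by (simp add: algebra_simps)
  have "\<mu> \<le> 1 / \<nu>"
    using assms unfolding mu_contract_def by simp
  then show "\<mu> * \<nu> \<le> 1"
    using strong_convexity_pos by (simp add: pos_le_divide_eq)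
qed

lemma expected_sq_dist_iterates_le:
  assumes mu: "0 < \<mu>" "\<mu> \<le> mu_contract"
  shows "measure_pmf.expectation (iterates \<mu> K L p N E B pn G asel bsel w0 j) (\<lambda>w. (norm (wo - w))\<^sup>2)
    \<le> dist_radius w0"
proof (induction j)
  case 0
  then show ?case
    by (simp add: dist_radius_def)
next
  case (Suc j)
  define M where "M = iterates \<mu> K L p N E B pn G asel bsel w0 j"
  note mu_le = mu_contract_le[OF mu]
  have "measure_pmf.expectation (iterates \<mu> K L p N E B pn G asel bsel w0 (Suc j)) (\<lambda>w. (norm (wo - w))\<^sup>2)
      = measure_pmf.expectation M
          (\<lambda>w. measure_pmf.expectation round_law (\<lambda>\<omega>. (norm (wo - fedavg_step \<mu> G w \<omega>))\<^sup>2))"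
    unfolding M_def by (simp add: expectation_bind_pmf_finite finite_iterates finite_round_law)
  also have "\<dots> \<le> measure_pmf.expectation M (\<lambda>w. (1 - \<mu> * \<nu> / 2) * (norm (wo - w))\<^sup>2 + \<mu>\<^sup>2 * dist_offset)"
    unfolding M_def using expected_sq_dist_step_le[OF _ mu_le(1,2)] mu(1)
    by (intro expectation_mono_pmf_finite finite_iterates) simp
  also have "\<dots> = (1 - \<mu> * \<nu> / 2) * measure_pmf.expectation M (\<lambda>w. (norm (wo - w))\<^sup>2) + \<mu>\<^sup>2 * dist_offset"
    unfolding M_def by (rule expectation_affine_pmf_finite[OF finite_iterates])
  also have "\<dots> \<le> (1 - \<mu> * \<nu> / 2) * dist_radius w0 + \<mu>\<^sup>2 * dist_offset"
    using Suc.IH mu_le(3) unfolding M_def by (intro add_right_mono mult_left_mono) auto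
  also have "\<dots> \<le> dist_radius w0"
  proof -
    have "2 * mu_contract * dist_offset / \<nu> \<le> dist_radius w0"
      unfolding dist_radius_def by simp
    then have "2 * mu_contract * dist_offset \<le> \<nu> * dist_radius w0"
      using strong_convexity_pos by (simp add: pos_divide_le_eq mult.commute)
    moreover have "2 * \<mu> * dist_offset \<le> 2 * mu_contract * dist_offset"
      using mu dist_offset_nonneg by (intro mult_right_mono) auto
    ultimately have "\<mu> * (2 * \<mu> * dist_offset) \<le> \<mu> * (\<nu> * dist_radius w0)"
      using mu(1) by (intro mult_left_mono) auto
    then show ?thesis
      by (simp add: power2_eq_square algebra_simps)
  qed
  finally show ?case .
qed

theorem noise_second_moment_linear:
  assumes "0 < \<mu>" "\<mu> \<le> mu_contract"
  shows "measure_pmf.expectation (noise_pmf \<mu> K L p N E B pn G asel bsel w0 j) (\<lambda>q. (norm q)\<^sup>2)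
    \<le> (noise_coeff_dist * dist_radius w0 + noise_coeff_dist * \<xi>\<^sup>2 + noise_coeff_sigma * mu_contract * sigma_avg) * \<mu>"
proof -
  have "measure_pmf.expectation (noise_pmf \<mu> K L p N E B pn G asel bsel w0 j) (\<lambda>q. (norm q)\<^sup>2)
      \<le> noise_coeff_dist * \<mu> * measure_pmf.expectation (iterates \<mu> K L p N E B pn G asel bsel w0 j)
           (\<lambda>w. (norm (wo - w))\<^sup>2)
        + noise_coeff_dist * \<mu> * \<xi>\<^sup>2 + noise_coeff_sigma * \<mu>\<^sup>2 * sigma_avg"
    using assms mu_contract_le[OF assms] by (intro noise_second_moment_le) auto
  also have "\<dots> \<le> noise_coeff_dist * \<mu> * dist_radius w0 + noise_coeff_dist * \<mu> * \<xi>\<^sup>2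
      + noise_coeff_sigma * (\<mu> * mu_contract) * sigma_avg"
    using assms expected_sq_dist_iterates_le[OF assms, of w0 j] noise_coeff_dist_nonneg
      noise_coeff_sigma_nonneg sigma_avg_nonneg
    by (intro add_mono mult_left_mono mult_right_mono) (auto simp: power2_eq_square)
  finally show ?thesis
    by (simp add: algebra_simps)
qed

end
theorem lemma5:
  fixes K L :: nat and N E B :: "nat \<Rightarrow> nat" and p :: "nat \<Rightarrow> real"
    and pn :: "nat \<Rightarrow> nat \<Rightarrow> real" and \<delta> \<nu> :: real
  assumes "K \<ge> 1" and "1 \<le> L" and "L \<le> K"
    and "\<forall>k<K. p k > 0" and "(\<Sum>k<K. p k) = 1"
    and "\<forall>k<K. E k \<ge> 1 \<and> B k \<ge> 1 \<and> B k \<le> N k"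
    and "\<forall>k<K. (\<forall>n<N k. pn k n > 0) \<and> (\<Sum>n<N k. pn k n) = 1"
    and "\<nu> > 0"
  shows
    "(\<exists>C1 C2 C3 \<mu>0. \<mu>0 > 0 \<and>
       (\<forall>(Q :: nat \<Rightarrow> 'a::euclidean_space \<Rightarrow> 'x \<Rightarrow> real) grad x \<xi> wo wko asel bsel w0 \<mu> j.
          instance_assms K L p N B pn \<delta> \<nu> Q grad x \<xi> wo wko asel bsel \<longrightarrow>
          0 < \<mu> \<longrightarrow> \<mu> \<le> \<mu>0 \<longrightarrow>
          measure_pmf.expectation
              (noise_pmf \<mu> K L p N E B pn (\<lambda>k n w. grad k w (x k n)) asel bsel w0 j)
              (\<lambda>q. (norm q)\<^sup>2)
            \<le> C1 * \<mu> * measure_pmf.expectation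
                  (iterates \<mu> K L p N E B pn (\<lambda>k n w. grad k w (x k n)) asel bsel w0 j)
                  (\<lambda>w. (norm (wo - w))\<^sup>2)
              + C2 * \<mu> * \<xi>\<^sup>2
              + C3 * \<mu>\<^sup>2 * ((1 / real K) *
                  (\<Sum>k<K. sigma_q2 N B pn (\<lambda>k n w. grad k w (x k n)) wko k))))
     \<and>
     (\<forall>(Q :: nat \<Rightarrow> 'a::euclidean_space \<Rightarrow> 'x \<Rightarrow> real) grad x \<xi> wo wko asel bsel w0.
        instance_assms K L p N B pn \<delta> \<nu> Q grad x \<xi> wo wko asel bsel \<longrightarrow>
        (\<exists>C \<mu>0. \<mu>0 > 0 \<and> (\<forall>\<mu> j. 0 < \<mu> \<longrightarrow> \<mu> \<le> \<mu>0 \<longrightarrow>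
           measure_pmf.expectation
              (noise_pmf \<mu> K L p N E B pn (\<lambda>k n w. grad k w (x k n)) asel bsel w0 j)
              (\<lambda>q. (norm q)\<^sup>2) \<le> C * \<mu>)))"
proof -
  interpret params: fedavg_params K L N E B p pn \<delta>
    using assms by unfold_locales auto
  have instance_locale: "fedavg_instance K L N E B p pn \<delta> \<nu> Q grad x \<xi> wo wko asel bsel"
    if "instance_assms K L p N B pn \<delta> \<nu> Q grad x \<xi> wo wko asel bsel"
    for Q :: "nat \<Rightarrow> 'a \<Rightarrow> 'x \<Rightarrow> real" and grad x \<xi> wo wko asel bsel
    using that assms by unfold_locales auto
  show ?thesis
    \<comment> \<open>unification picks \<open>C1 = C2 = noise_coeff_dist\<close>, \<open>C3 = noise_coeff_sigma\<close> and, per instance,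
      \<open>C\<close> and \<open>\<mu>0 = mu_contract\<close> from \<open>noise_second_moment_linear\<close>\<close>
  proof (intro conjI exI allI impI)
    show "params.mu_stable > 0"
      by (rule params.mu_stable_pos)
  qed ((rule fedavg_instance.noise_second_moment_le[OF instance_locale]; simp),
      (auto intro: fedavg_instance.mu_contract_pos[OF instance_locale]
        fedavg_instance.noise_second_moment_linear[OF instance_locale]))
qed

end
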